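(* Let $f:\mathbf{R}\to\mathbf{R}$ be additive. Then $f$ is everywhere surjective if and only if $f$ is surjective and not injective.
   Context: A function $f:\mathbf{R}\to\mathbf{R}$ is additive if $f(x+y)=f(x)+f(y)$ for all $x,y\in\mathbf{R}$. It is everywhere surjective if for every open interval $(a,b)$ with $a<b$ and every $y\in\mathbf{R}$ there exists $x\in(a,b)$ with $f(x)=y$. *)

theory Defs
  imports Main "HOL.Real"
begin

definition additive :: "(real \<Rightarrow> real) \<Rightarrow> bool" where
  "additive f \<longleftrightarrow> (\<forall>x y. f (x + y) = f x + f y)"

definition everywhere_surjective :: "(real \<Rightarrow> real) \<Rightarrow> bool" where
  "everywhere_surjective f \<longleftrightarrow>
     (\<forall>a b y. a < b \<longrightarrow> (\<exists>x. a < x \<and> x < b \<and> f x = y))"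

end

theory Submission
  imports Defs
begin

text \<open>An additive function is \<open>\<rat>\<close>-linear. If it is not injective, its kernel contains some
  \<open>z \<noteq> 0\<close> and hence the dense set \<open>\<rat> z\<close>; so every nonempty fibre \<open>w + ker f\<close> is dense, and
  surjectivity makes every fibre nonempty. Conversely an everywhere surjective function is
  surjective, and it takes the value \<open>f 0\<close> again in \<open>(1, 2)\<close>.\<close>

lemma additive_zero:
  assumes "additive f" shows "f 0 = 0"
proof -
  have "f (0 + 0) = f 0 + f 0" using assms unfolding additive_def by blast
  then show ?thesis by simp
qed

lemma additive_minus:
  assumes "additive f" shows "f (- x) = - f x"
proof -
  have "f (x + - x) = f x + f (- x)" using assms unfolding additive_def by blast
  then show ?thesis using additive_zero[OF assms] by simp
qed

lemma additive_diff:
  assumes "additive f" shows "f (x - y) = f x - f y"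
proof -
  have "f (x + - y) = f x + f (- y)" using assms unfolding additive_def by blast
  then show ?thesis using additive_minus[OF assms] by simp
qed

lemma additive_of_nat_mult:
  assumes "additive f" shows "f (of_nat n * x) = of_nat n * f x"
proof (induction n)
  case 0
  show ?case using additive_zero[OF assms] by simp
next
  case (Suc n)
  have "f (of_nat (Suc n) * x) = f (of_nat n * x) + f x"
    using assms unfolding additive_def by (simp add: algebra_simps)
  with Suc show ?case by (simp add: algebra_simps)
qed

lemma additive_of_int_mult:
  assumes "additive f" shows "f (of_int k * x) = of_int k * f x"
proof (cases "k \<ge> 0")
  case True
  then obtain n where "k = int n" using nonneg_eq_int by blast
  then show ?thesis using additive_of_nat_mult[OF assms] by simp
next
  case False
  define n where "n = nat (- k)"
  then have k: "k = - int n" using False by simp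
  have "f (of_int k * x) = f (- (of_nat n * x))" using k by simp
  also have "\<dots> = - (of_nat n * f x)"
    using additive_minus[OF assms] additive_of_nat_mult[OF assms] by simp
  finally show ?thesis using k by simp
qed

lemma additive_Rats_mult:
  assumes "additive f" and "q \<in> \<rat>" shows "f (q * x) = q * f x"
proof -
  obtain m n where n: "n > 0" and q: "q = of_int m / of_int n"
    using Rats_cases'[OF assms(2)] by blast
  have "of_int n * f (q * x) = f (of_int n * (q * x))"
    using additive_of_int_mult[OF assms(1)] by simp
  also have "\<dots> = f (of_int m * x)" using n q by simp
  also have "\<dots> = of_int m * f x" using additive_of_int_mult[OF assms(1)] .
  finally have "of_int n * f (q * x) = of_int n * (q * f x)" using n q by simp
  then show ?thesis using n by simp
qed

lemma Rats_mult_dense: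
  fixes z :: real
  assumes "z \<noteq> 0" and "a < b"
  obtains q where "q \<in> \<rat>" "a < q * z" "q * z < b"
proof (cases "z > 0")
  case True
  then have "a / z < b / z" using assms(2) by (simp add: divide_strict_right_mono)
  then obtain q where "q \<in> \<rat>" "a / z < q" "q < b / z" using Rats_dense_in_real by blast
  then show ?thesis using that True by (simp add: field_simps)
next
  case False
  then have "z < 0" using assms(1) by simp
  then have "b / z < a / z" using assms(2) by (simp add: divide_strict_right_mono_neg)
  then obtain q where "q \<in> \<rat>" "b / z < q" "q < a / z" using Rats_dense_in_real by blast
  then show ?thesis using that \<open>z < 0\<close> by (simp add: field_simps)
qed

lemma everywhere_surjective_imp_surj:
  assumes "everywhere_surjective f" shows "surj f"
proof -
  have "\<exists>x. 0 < x \<and> x < 1 \<and> f x = y" for y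
    using assms unfolding everywhere_surjective_def by simp
  then show ?thesis by (metis surjI)
qed

lemma everywhere_surjective_imp_not_inj:
  assumes "everywhere_surjective f" shows "\<not> inj f"
proof -
  have "\<exists>x. 1 < x \<and> x < 2 \<and> f x = f 0"
    using assms unfolding everywhere_surjective_def by simp
  then obtain x :: real where "1 < x" "f x = f 0" by blast
  then show ?thesis unfolding inj_def by force
qed

lemma additive_surj_not_inj_imp_everywhere_surjective:
  assumes "additive f" and "surj f" and "\<not> inj f"
  shows "everywhere_surjective f"
  unfolding everywhere_surjective_def
proof (intro allI impI)
  fix a b y :: real
  assume "a < b"
  obtain u v where "u \<noteq> v" "f u = f v" using \<open>\<not> inj f\<close> unfolding inj_def by blast
  then have z: "u - v \<noteq> 0" "f (u - v) = 0" using additive_diff[OF assms(1)] by auto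
  obtain w where w: "f w = y" using \<open>surj f\<close> by (metis surjD)
  obtain q where "q \<in> \<rat>" "a - w < q * (u - v)" "q * (u - v) < b - w"
    using Rats_mult_dense[OF z(1), of "a - w" "b - w"] \<open>a < b\<close> by auto
  moreover have "f (w + q * (u - v)) = y"
    using assms(1) additive_Rats_mult[OF assms(1) \<open>q \<in> \<rat>\<close>] z(2) w unfolding additive_def by simp
  ultimately show "\<exists>x. a < x \<and> x < b \<and> f x = y"
    by (intro exI[of _ "w + q * (u - v)"]) auto
qed

theorem mainTheorem9:
  fixes f :: "real \<Rightarrow> real"
  assumes "additive f"
  shows "everywhere_surjective f \<longleftrightarrow> surj f \<and> \<not> inj f"
  using everywhere_surjective_imp_surj everywhere_surjective_imp_not_inj
    additive_surj_not_inj_imp_everywhere_surjective[OF assms] by blast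

end
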